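(* Let $H$ be a strong symplectic Hilbert space and $N:\mathbb{D}\to W_+(H)$ a Nevanlinna disc, with $H_\pm$, $B$, $E$, $F^\dagger$, $F$, $K$, $\gamma_\pm$, $\varphi^\dagger_\mp$ as described in the context. Then the localized kernel $\mathcal{K}$ is given by: for $\lambda,\mu\in\mathbb{D}_+$: $\mathcal{K}(\lambda,\mu)=\dfrac{I-B(\lambda)B(\mu)^*}{1-\lambda\bar\mu}$; for $\lambda,\mu\in\mathbb{D}_-$: $\mathcal{K}(\lambda,\mu)=\dfrac{I-B(\bar\lambda)^*B(\bar\mu)}{1-\lambda\bar\mu}$; for $\lambda\in\mathbb{D}_+$, $\mu\in\mathbb{D}_-$: $\mathcal{K}(\lambda,\mu)=\dfrac{B(\lambda)-B(\bar\mu)}{\lambda-\bar\mu}$; for $\lambda\in\mathbb{D}_-$, $\mu\in\mathbb{D}_+$: $\mathcal{K}(\lambda,\mu)=\dfrac{B(\bar\lambda)^*-B(\mu)^*}{\lambda-\bar\mu}$; where in the last two cases the value at $\lambda=\bar\mu$ is understood as the limit.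
   Context: A strong symplectic Hilbert space is a complex Hilbert space $H$ with a continuous sesquilinear form $[\cdot,\cdot]$ (linear in the first variable) with $[y,x]=-\overline{[x,y]}$, non-degenerate, such that $x\mapsto[\cdot,x]$ maps $H$ onto its dual; $S^{\perp_s}=\{x:[x,y]=0\ \forall y\in S\}$. $W_+(H)$ (resp. $W_-(H)$) is the complex manifold of maximally completely positive- (resp. negative-) definite subspaces: closed $L$ maximal with $-i[x,x]>0$ (resp. $i[x,x]>0$) for $0\ne x\in L$ and with $\pm(-i[x,x])\ge c\|x\|^2$ on $L$; for $L\in W_+(H)$ one has $H=L\oplus L^{\perp_s}$ and $L^{\perp_s}\in W_-(H)$. A Nevanlinna disc is a holomorphic map $N:\mathbb{D}\to W_+(H)$. Put $H_+=N(0)$, $H_-=H_+^{\perp_s}$, with Hilbert inner products $(\cdot,\cdot)_+=-i[\cdot,\cdot]$ on $H_+$ and $(\cdot,\cdot)_-=i[\cdot,\cdot]$ on $H_-$, so $[a,b]=i(a_+,b_+)_+-i(a_-,b_-)_-$ for the components in $H=H_+\oplus H_-$. Then $N(\lambda)=\{x+B(\lambda)x:x\in H_+\}$ for a holomorphic $B:\mathbb{D}\to\mathbb{B}(H_+,H_-)$ with $\|B(\lambda)\|<1$, and $N(\lambda)^{\perp_s}=\{B(\lambda)^*x+x:x\in H_-\}$. $\mathbb{D}_\pm$ are two copies of $\mathbb{D}$; for $\lambda\in\mathbb{D}_\pm$, $\bar\lambda$ is regarded as a point of $\mathbb{D}_\mp$. Set $E_\lambda=N(\lambda)$ for $\lambda\in\mathbb{D}_+$,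 $E_\lambda=N(\bar\lambda)^{\perp_s}$ for $\lambda\in\mathbb{D}_-$, with Hermitian inner product $(\cdot,\cdot)_\lambda$ equal to $-i[\cdot,\cdot]$ on fibers over $\mathbb{D}_+$ and $i[\cdot,\cdot]$ on fibers over $\mathbb{D}_-$. Set $F^\dagger_\lambda=E_{\bar\lambda}$ (with the inner product of $E_{\bar\lambda}$, also written $(\cdot,\cdot)_\lambda$) and $F_\lambda$ = conjugate-linear continuous functionals on $F^\dagger_\lambda$, pairing $((\cdot,\cdot))$. For each $\lambda$, $H=F^\dagger_\lambda\oplus F^\dagger_{\bar\lambda}$; $\mathcal{P}_\lambda$ is the projection onto $F^\dagger_\lambda$ along $F^\dagger_{\bar\lambda}$, and $\mathcal{Q}(\lambda,\mu):F^\dagger_\mu\to F_\lambda$ is $\mathcal{Q}(\lambda,\mu)\omega=(\mathcal{P}_\lambda\omega,\cdot)_\lambda$. Kernel: $K(\lambda,\mu)=\mathcal{Q}(\lambda,\mu)/(1-\lambda\bar\mu)$ if $\lambda,\mu$ lie in the same copy, and $K(\lambda,\mu)=-\mathcal{Q}(\lambda,\mu)/(\lambda-\bar\mu)$ if they lie in different copies (at $\lambda=\bar\mu$ defined as the limit). Trivializations: $\gamma_+(\lambda)x=x+B(\lambda)x\in E_\lambda$ ($\lambda\in\mathbb{D}_+$, $x\in H_+$), $\gamma_-(\lambda)x=B(\bar\lambda)^*x+x\in E_\lambda$ ($\lambda\in\mathbb{D}_-$, $x\in H_-$). For $\lambda\in\mathbb{D}_+$, $\varphi_-^\dagger(\lambda):F_\lambda\to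 H_-$ by $(\varphi_-^\dagger(\lambda)\omega,x)_-=((\omega,\gamma_-(\bar\lambda)x))$; for $\lambda\in\mathbb{D}_-$, $\varphi_+^\dagger(\lambda):F_\lambda\to H_+$ by $(\varphi_+^\dagger(\lambda)\omega,x)_+=((\omega,\gamma_+(\bar\lambda)x))$. Localized kernel: $\mathcal{K}(\lambda,\mu)=\varphi_\sigma^\dagger(\lambda)\circ K(\lambda,\mu)\circ\gamma_\tau(\bar\mu)$, where $\sigma=-$ if $\lambda\in\mathbb{D}_+$ and $\sigma=+$ if $\lambda\in\mathbb{D}_-$, and $\tau=-$ if $\mu\in\mathbb{D}_+$ and $\tau=+$ if $\mu\in\mathbb{D}_-$. *)

theory Defs
  imports "HOL-Analysis.Analysis"
begin

class cvector = real_vector +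
  fixes scaleC :: "complex \<Rightarrow> 'a \<Rightarrow> 'a" (infixr "*\<^sub>C" 75)
  assumes scaleC_add_right: "a *\<^sub>C (x + y) = a *\<^sub>C x + a *\<^sub>C y"
    and scaleC_add_left: "(a + b) *\<^sub>C x = a *\<^sub>C x + b *\<^sub>C x"
    and scaleC_scaleC: "a *\<^sub>C (b *\<^sub>C x) = (a * b) *\<^sub>C x"
    and scaleC_one: "1 *\<^sub>C x = x"
    and scaleR_scaleC: "r *\<^sub>R x = complex_of_real r *\<^sub>C x"

class cinner_space = cvector + real_normed_vector +
  fixes cinner :: "'a \<Rightarrow> 'a \<Rightarrow> complex"
  assumes cinner_add_left: "cinner (x + y) z = cinner x z + cinner y z"
    and cinner_scaleC_left: "cinner (a *\<^sub>C x) y = a * cinner x y"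
    and cinner_commute: "cinner y x = cnj (cinner x y)"
    and cinner_ge_zero: "0 \<le> Re (cinner x x)"
    and cinner_eq_zero_iff: "cinner x x = 0 \<longleftrightarrow> x = 0"
    and norm_eq_sqrt_cinner: "norm x = sqrt (Re (cinner x x))"

class chilbert = cinner_space + complete_space

definition clinear_functional :: "('a::cvector \<Rightarrow> complex) \<Rightarrow> bool" where
  "clinear_functional f \<longleftrightarrow>
     (\<forall>x y. f (x + y) = f x + f y) \<and> (\<forall>a x. f (a *\<^sub>C x) = a * f x)"

definition bounded_functional :: "('a::real_normed_vector \<Rightarrow> complex) \<Rightarrow> bool" where
  "bounded_functional f \<longleftrightarrow> (\<exists>C. \<forall>x. cmod (f x) \<le> C * norm x)"

definition strong_symplectic :: "('a::chilbert \<Rightarrow> 'a \<Rightarrow> complex) \<Rightarrow> bool" where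
  "strong_symplectic sf \<longleftrightarrow>
     (\<forall>x y z. sf (x + y) z = sf x z + sf y z) \<and>
     (\<forall>a x y. sf (a *\<^sub>C x) y = a * sf x y) \<and>
     (\<forall>x y. sf y x = - cnj (sf x y)) \<and>
     (\<exists>C. \<forall>x y. cmod (sf x y) \<le> C * norm x * norm y) \<and>
     (\<forall>x. (\<forall>y. sf y x = 0) \<longrightarrow> x = 0) \<and>
     (\<forall>f. clinear_functional f \<and> bounded_functional f \<longrightarrow> (\<exists>x. f = (\<lambda>y. sf y x)))"

definition sperp :: "('a \<Rightarrow> 'a \<Rightarrow> complex) \<Rightarrow> 'a set \<Rightarrow> 'a set" where
  "sperp sf S = {x. \<forall>y\<in>S. sf x y = 0}"

definition csubspace :: "'a::cvector set \<Rightarrow> bool" where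
  "csubspace S \<longleftrightarrow> 0 \<in> S \<and> (\<forall>x\<in>S. \<forall>y\<in>S. x + y \<in> S) \<and> (\<forall>a. \<forall>x\<in>S. a *\<^sub>C x \<in> S)"

definition pos_def_sub :: "('a::cvector \<Rightarrow> 'a \<Rightarrow> complex) \<Rightarrow> 'a set \<Rightarrow> bool" where
  "pos_def_sub sf L \<longleftrightarrow> (\<forall>x\<in>L. x \<noteq> 0 \<longrightarrow> Re (- \<i> * sf x x) > 0)"

definition neg_def_sub :: "('a::cvector \<Rightarrow> 'a \<Rightarrow> complex) \<Rightarrow> 'a set \<Rightarrow> bool" where
  "neg_def_sub sf L \<longleftrightarrow> (\<forall>x\<in>L. x \<noteq> 0 \<longrightarrow> Re (\<i> * sf x x) > 0)"

definition Wplus :: "('a::chilbert \<Rightarrow> 'a \<Rightarrow> complex) \<Rightarrow> 'a set set" where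
  "Wplus sf = {L. closed L \<and> csubspace L \<and> pos_def_sub sf L \<and>
      (\<exists>c>0. \<forall>x\<in>L. Re (- \<i> * sf x x) \<ge> c * (norm x)\<^sup>2) \<and>
      (\<forall>M. csubspace M \<and> L \<subseteq> M \<and> pos_def_sub sf M \<longrightarrow> M = L)}"

definition Wminus :: "('a::chilbert \<Rightarrow> 'a \<Rightarrow> complex) \<Rightarrow> 'a set set" where
  "Wminus sf = {L. closed L \<and> csubspace L \<and> neg_def_sub sf L \<and>
      (\<exists>c>0. \<forall>x\<in>L. Re (\<i> * sf x x) \<ge> c * (norm x)\<^sup>2) \<and>
      (\<forall>M. csubspace M \<and> L \<subseteq> M \<and> neg_def_sub sf M \<longrightarrow> M = L)}"

definition Hp :: "(complex \<Rightarrow> 'a set) \<Rightarrow> 'a set" where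
  "Hp N = N 0"

definition Hm :: "('a \<Rightarrow> 'a \<Rightarrow> complex) \<Rightarrow> (complex \<Rightarrow> 'a set) \<Rightarrow> 'a set" where
  "Hm sf N = sperp sf (N 0)"

definition ipp :: "('a \<Rightarrow> 'a \<Rightarrow> complex) \<Rightarrow> 'a \<Rightarrow> 'a \<Rightarrow> complex" where
  "ipp sf x y = - \<i> * sf x y"

definition ipm :: "('a \<Rightarrow> 'a \<Rightarrow> complex) \<Rightarrow> 'a \<Rightarrow> 'a \<Rightarrow> complex" where
  "ipm sf x y = \<i> * sf x y"

definition nevB :: "('a::ab_group_add \<Rightarrow> 'a \<Rightarrow> complex) \<Rightarrow> (complex \<Rightarrow> 'a set) \<Rightarrow> complex \<Rightarrow> 'a \<Rightarrow> 'a" where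
  "nevB sf N l x = (THE y. y \<in> Hm sf N \<and> x + y \<in> N l)"

definition nevBadj :: "('a::ab_group_add \<Rightarrow> 'a \<Rightarrow> complex) \<Rightarrow> (complex \<Rightarrow> 'a set) \<Rightarrow> complex \<Rightarrow> 'a \<Rightarrow> 'a" where
  "nevBadj sf N l y = (THE z. z \<in> Hp N \<and> (\<forall>x\<in>Hp N. ipp sf z x = ipm sf y (nevB sf N l x)))"

text \<open>Holomorphy is
  expressed in the standard chart of W_+(H) at N(0), i.e. complex differentiability of
  l \<mapsto> B(l) in the operator norm of B(H_+,H_-).\<close>
definition nevanlinna_disc :: "('a::chilbert \<Rightarrow> 'a \<Rightarrow> complex) \<Rightarrow> (complex \<Rightarrow> 'a set) \<Rightarrow> bool" where
  "nevanlinna_disc sf N \<longleftrightarrow>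
     (\<forall>l\<in>ball 0 1. N l \<in> Wplus sf) \<and>
     (\<forall>l0\<in>ball 0 1. \<exists>T. \<forall>\<epsilon>>0. \<exists>\<delta>>0. \<forall>l\<in>ball 0 1. 0 < cmod (l - l0) \<and> cmod (l - l0) < \<delta> \<longrightarrow>
        (\<forall>x\<in>Hp N. norm (nevB sf N l x - nevB sf N l0 x - (l - l0) *\<^sub>C T x)
                      \<le> \<epsilon> * cmod (l - l0) * norm x))"

text \<open>Points of D_+ \<union> D_- are pairs (s, l): s = True for D_+, s = False for D_-,
  with cmod l < 1.  dbar (s,l) = (\<not>s, cnj l) is \<bar>l regarded in the other copy.\<close>
definition dbar :: "bool \<times> complex \<Rightarrow> bool \<times> complex" where
  "dbar p = (\<not> fst p, cnj (snd p))"

definition fibE :: "('a \<Rightarrow> 'a \<Rightarrow> complex) \<Rightarrow> (complex \<Rightarrow> 'a set) \<Rightarrow> bool \<times> complex \<Rightarrow> 'a set" where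
  "fibE sf N p = (if fst p then N (snd p) else sperp sf (N (cnj (snd p))))"

definition fib_ip :: "('a \<Rightarrow> 'a \<Rightarrow> complex) \<Rightarrow> bool \<times> complex \<Rightarrow> 'a \<Rightarrow> 'a \<Rightarrow> complex" where
  "fib_ip sf p x y = (if fst p then - \<i> * sf x y else \<i> * sf x y)"

definition Fdag :: "('a \<Rightarrow> 'a \<Rightarrow> complex) \<Rightarrow> (complex \<Rightarrow> 'a set) \<Rightarrow> bool \<times> complex \<Rightarrow> 'a set" where
  "Fdag sf N p = fibE sf N (dbar p)"

definition Fdag_ip :: "('a \<Rightarrow> 'a \<Rightarrow> complex) \<Rightarrow> bool \<times> complex \<Rightarrow> 'a \<Rightarrow> 'a \<Rightarrow> complex" where
  "Fdag_ip sf p = fib_ip sf (dbar p)"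

definition projP :: "('a::ab_group_add \<Rightarrow> 'a \<Rightarrow> complex) \<Rightarrow> (complex \<Rightarrow> 'a set) \<Rightarrow> bool \<times> complex \<Rightarrow> 'a \<Rightarrow> 'a" where
  "projP sf N p w = (THE u. u \<in> Fdag sf N p \<and> w - u \<in> Fdag sf N (dbar p))"

text \<open>Q(p,q) w = (P_p w, .)_p, a conjugate-linear functional on F^\<dagger>_p (element of F_p);
  elements of F_p are represented as functions 'a \<Rightarrow> complex (only their values on
  F^\<dagger>_p matter), and the pairing ((w, x)) is application w x.\<close>
definition Qop :: "('a::ab_group_add \<Rightarrow> 'a \<Rightarrow> complex) \<Rightarrow> (complex \<Rightarrow> 'a set) \<Rightarrow> bool \<times> complex \<Rightarrow> bool \<times> complex \<Rightarrow> 'a \<Rightarrow> 'a \<Rightarrow> complex" where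
  "Qop sf N p q w = (\<lambda>y. Fdag_ip sf p (projP sf N p w) y)"

text \<open>The kernel K(p,q) away from the points l = \<bar>m in different copies.\<close>
definition kern :: "('a::ab_group_add \<Rightarrow> 'a \<Rightarrow> complex) \<Rightarrow> (complex \<Rightarrow> 'a set) \<Rightarrow> bool \<times> complex \<Rightarrow> bool \<times> complex \<Rightarrow> 'a \<Rightarrow> 'a \<Rightarrow> complex" where
  "kern sf N p q w = (\<lambda>y.
     (if fst p = fst q then 1 / (1 - snd p * cnj (snd q)) else - 1 / (snd p - cnj (snd q)))
     * Qop sf N p q w y)"

definition gam :: "('a::ab_group_add \<Rightarrow> 'a \<Rightarrow> complex) \<Rightarrow> (complex \<Rightarrow> 'a set) \<Rightarrow> bool \<times> complex \<Rightarrow> 'a \<Rightarrow> 'a" where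
  "gam sf N p x = (if fst p then x + nevB sf N (snd p) x
                   else nevBadj sf N (cnj (snd p)) x + x)"

text \<open>phi^\<dagger>_-(p) for p in D_+ and phi^\<dagger>_+(p) for p in D_-.\<close>
definition phidag :: "('a::ab_group_add \<Rightarrow> 'a \<Rightarrow> complex) \<Rightarrow> (complex \<Rightarrow> 'a set) \<Rightarrow> bool \<times> complex \<Rightarrow> ('a \<Rightarrow> complex) \<Rightarrow> 'a" where
  "phidag sf N p w = (if fst p
     then (THE v. v \<in> Hm sf N \<and> (\<forall>x\<in>Hm sf N. ipm sf v x = w (gam sf N (dbar p) x)))
     else (THE v. v \<in> Hp N \<and> (\<forall>x\<in>Hp N. ipp sf v x = w (gam sf N (dbar p) x))))"

definition lockern_raw :: "('a::ab_group_add \<Rightarrow> 'a \<Rightarrow> complex) \<Rightarrow> (complex \<Rightarrow> 'a set) \<Rightarrow> bool \<times> complex \<Rightarrow> bool \<times> complex \<Rightarrow> 'a \<Rightarrow> 'a" where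
  "lockern_raw sf N p q x = phidag sf N p (kern sf N p q (gam sf N (dbar q) x))"

definition lockern :: "('a::{ab_group_add, t2_space} \<Rightarrow> 'a \<Rightarrow> complex) \<Rightarrow> (complex \<Rightarrow> 'a set) \<Rightarrow> bool \<times> complex \<Rightarrow> bool \<times> complex \<Rightarrow> 'a \<Rightarrow> 'a" where
  "lockern sf N p q x =
     (if fst p \<noteq> fst q \<and> snd p = cnj (snd q)
      then Lim (at (snd p)) (\<lambda>l. lockern_raw sf N (fst p, l) q x)
      else lockern_raw sf N p q x)"

end

theory Submission
  imports Defs
begin

(* Each value of the localized kernel is a vector v of H_- (or H_+) characterised by its
   pairings: phi^dagger(lambda) turns a functional into the vector representing it against
   gamma(conj lambda) x', so v is determined by [v, x'] = k(lambda, mu) [P_lambda gamma(conj mu) x,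
   gamma(conj lambda) x'] for all x', where k is the scalar factor of K.  The vector
   gamma(conj lambda) x' is symplectically orthogonal to the range of I - P_lambda, so the
   projection drops out, and the remaining pairing is computed from the graph descriptions
   N(lambda) = {x + B(lambda) x}, N(lambda)^perp = {B(lambda)^* y + y} and [H_+, H_-] = 0.
   For points on different sheets the value at lambda = conj mu is, by definition, the limit of
   the values nearby.

   The analytic input is that each N(lambda) in W_+(H) is the graph of a bounded operator
   B(lambda) : H_+ -> H_-, and that B(lambda) has an adjoint.  Both rest on representing bounded
   conjugate-linear functionals on a subspace where -i[.,.] is coercive, which is done by
   minimizing the energy Re q(x, x) - 2 Re f(x). *)

section \<open>Complex normed spaces\<close>

lemma scaleC_zero_left [simp]: "0 *\<^sub>C x = (0::'a::cvector)"
  using scaleR_scaleC[of 0 x] by simp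

lemma scaleC_minus_one: "(- 1) *\<^sub>C x = - (x::'a::cvector)"
  using scaleR_scaleC[of "- 1" x] by simp

lemma csubspace_0: "csubspace S \<Longrightarrow> 0 \<in> S"
  and csubspace_add: "csubspace S \<Longrightarrow> x \<in> S \<Longrightarrow> y \<in> S \<Longrightarrow> x + y \<in> S"
  and csubspace_scaleC: "csubspace S \<Longrightarrow> x \<in> S \<Longrightarrow> a *\<^sub>C x \<in> S"
  by (simp_all add: csubspace_def)

lemma csubspace_diff: "csubspace S \<Longrightarrow> x \<in> S \<Longrightarrow> y \<in> S \<Longrightarrow> x - y \<in> S"
  using csubspace_add[of S x "(- 1) *\<^sub>C y"] csubspace_scaleC[of S y "- 1"]
  by (simp add: scaleC_minus_one)

lemma csubspace_extend:
  assumes "csubspace L"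
  shows "csubspace {n + a *\<^sub>C h |n a. n \<in> L}"
  unfolding csubspace_def
proof (intro conjI ballI allI)
  show "0 \<in> {n + a *\<^sub>C h |n a. n \<in> L}"
    using csubspace_0[OF assms] by (intro CollectI exI[of _ 0]) simp
next
  fix x y assume "x \<in> {n + a *\<^sub>C h |n a. n \<in> L}" "y \<in> {n + a *\<^sub>C h |n a. n \<in> L}"
  then obtain n1 a1 n2 a2 where "x = n1 + a1 *\<^sub>C h" "y = n2 + a2 *\<^sub>C h" "n1 \<in> L" "n2 \<in> L"
    by blast
  then have "x + y = (n1 + n2) + (a1 + a2) *\<^sub>C h" "n1 + n2 \<in> L"
    using csubspace_add[OF assms] by (auto simp: scaleC_add_left algebra_simps)
  then show "x + y \<in> {n + a *\<^sub>C h |n a. n \<in> L}" by blast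
next
  fix b x assume "x \<in> {n + a *\<^sub>C h |n a. n \<in> L}"
  then obtain n1 a1 where "x = n1 + a1 *\<^sub>C h" "n1 \<in> L"
    by blast
  then have "b *\<^sub>C x = b *\<^sub>C n1 + (b * a1) *\<^sub>C h" "b *\<^sub>C n1 \<in> L"
    using csubspace_scaleC[OF assms] by (auto simp: scaleC_add_right scaleC_scaleC)
  then show "b *\<^sub>C x \<in> {n + a *\<^sub>C h |n a. n \<in> L}" by blast
qed

lemma Cauchy_dominated:
  fixes s :: "nat \<Rightarrow> 'a::real_normed_vector" and t :: "nat \<Rightarrow> 'b::real_normed_vector"
  assumes s: "Cauchy s" and dominated: "\<And>j k. norm (t j - t k) \<le> K * norm (s j - s k)"
  shows "Cauchy t"
proof (rule metric_CauchyI)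
  fix e :: real assume e: "e > 0"
  then obtain M where M: "\<forall>j\<ge>M. \<forall>k\<ge>M. dist (s j) (s k) < e / (\<bar>K\<bar> + 1)"
    using metric_CauchyD[OF s, of "e / (\<bar>K\<bar> + 1)"] by auto
  have "dist (t j) (t k) < e" if "j \<ge> M" "k \<ge> M" for j k
  proof -
    have "norm (t j - t k) \<le> (\<bar>K\<bar> + 1) * norm (s j - s k)"
      using order_trans[OF dominated[of j k] mult_right_mono[of K "\<bar>K\<bar> + 1"]] by simp
    also have "\<dots> < e"
      using M that by (simp add: dist_norm pos_less_divide_eq mult.commute)
    finally show ?thesis
      by (simp add: dist_norm)
  qed
  then show "\<exists>M. \<forall>j\<ge>M. \<forall>k\<ge>M. dist (t j) (t k) < e" by blast
qed

lemma minus_i_mult_eq_i_mult_iff: "- (\<i> * a) = \<i> * b \<longleftrightarrow> a = - b"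
proof -
  have "- (\<i> * a) = \<i> * b \<longleftrightarrow> \<i> * (- a) = \<i> * b"
    by simp
  also have "\<dots> \<longleftrightarrow> - a = b"
    by (simp only: mult_cancel_left) simp
  also have "\<dots> \<longleftrightarrow> a = - b"
    by auto
  finally show ?thesis .
qed

section \<open>Representing functionals by a coercive Hermitian form\<close>

(* On S the form q is only equivalent to, not equal to, the inner product of the Hilbert space,
   so the Riesz representation is proved directly: a minimizer of the energy represents f. *)

locale coercive_hermitian_form =
  fixes q :: "'a::chilbert \<Rightarrow> 'a \<Rightarrow> complex" and S :: "'a set" and c :: real
  assumes add_left: "q (x + y) z = q x z + q y z"
    and scaleC_left: "q (a *\<^sub>C x) y = a * q x y"
    and hermitian: "q y x = cnj (q x y)"
    and bounded: "\<exists>C. \<forall>x y. cmod (q x y) \<le> C * norm x * norm y"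
    and csubspace: "csubspace S"
    and closed: "closed S"
    and c_pos: "c > 0"
    and coercive: "x \<in> S \<Longrightarrow> c * (norm x)\<^sup>2 \<le> Re (q x x)"
begin

lemma add_right: "q x (y + z) = q x y + q x z"
  by (metis add_left complex_cnj_add hermitian)

lemma scaleC_right: "q x (a *\<^sub>C y) = cnj a * q x y"
  by (metis scaleC_left complex_cnj_mult hermitian)

lemma uminus_left: "q (- x) y = - q x y"
  using scaleC_left[of "- 1" x y] by (simp add: scaleC_minus_one)

lemma uminus_right: "q x (- y) = - q x y"
  using scaleC_right[of x "- 1" y] by (simp add: scaleC_minus_one)

lemma Re_commute: "Re (q x y) = Re (q y x)"
  by (simp add: hermitian[of x y])

lemma Re_nonneg:
  assumes "x \<in> S"
  shows "0 \<le> Re (q x x)"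
proof -
  have "0 \<le> c * (norm x)\<^sup>2"
    using c_pos by simp
  then show ?thesis
    using coercive[OF assms] by linarith
qed

end

locale riesz_problem = coercive_hermitian_form +
  fixes f :: "'a::chilbert \<Rightarrow> complex"
  assumes f_add: "x \<in> S \<Longrightarrow> y \<in> S \<Longrightarrow> f (x + y) = f x + f y"
    and f_scaleC: "x \<in> S \<Longrightarrow> f (a *\<^sub>C x) = cnj a * f x"
    and f_bounded: "\<exists>M. \<forall>x\<in>S. cmod (f x) \<le> M * norm x"
begin

definition energy :: "'a \<Rightarrow> real" where
  "energy x = Re (q x x) - 2 * Re (f x)"

lemma energy_add:
  assumes "x \<in> S" "z \<in> S"
  shows "energy (x + z) = energy x + 2 * Re (q z x) + Re (q z z) - 2 * Re (f z)"
proof -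
  have "q (x + z) (x + z) = q x x + q x z + q z x + q z z"
    by (simp add: add_left add_right)
  then show ?thesis
    unfolding energy_def f_add[OF assms] using Re_commute[of x z] by simp
qed

lemma bdd_below_energy: "bdd_below (energy ` S)"
proof -
  obtain M where M: "\<forall>x\<in>S. cmod (f x) \<le> M * norm x"
    using f_bounded by blast
  have "- (M\<^sup>2 / c) \<le> energy x" if "x \<in> S" for x
  proof -
    have "Re (f x) \<le> M * norm x"
      using M that complex_Re_le_cmod order_trans by blast
    then have "c * (norm x)\<^sup>2 - 2 * M * norm x \<le> energy x"
      using coercive[OF that] unfolding energy_def by linarith
    moreover have "0 \<le> (c * norm x - M)\<^sup>2" by simp
    then have "- (M\<^sup>2 / c) \<le> c * (norm x)\<^sup>2 - 2 * M * norm x"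
      using c_pos by (simp add: field_simps power2_eq_square)
    ultimately show ?thesis by linarith
  qed
  then show ?thesis by (rule bdd_belowI2)
qed

lemma energy_midpoint_bound:
  assumes a: "a \<in> S" and b: "b \<in> S" and lower: "\<And>y. y \<in> S \<Longrightarrow> m \<le> energy y"
  shows "c * (norm (a - b))\<^sup>2 \<le> 2 * (energy a + energy b - 2 * m)"
proof -
  define h where "h = (1/2::real) *\<^sub>R (a + b)"
  define d where "d = (1/2::real) *\<^sub>R (a - b)"
  have h: "h \<in> S" and d: "d \<in> S" and md: "- d \<in> S"
    unfolding h_def d_def scaleR_scaleC
    by (intro csubspace_scaleC csubspace_add csubspace_diff csubspace a b
        csubspace_scaleC[where a = "- 1", unfolded scaleC_minus_one])+
  have "(a + b) + (a - b) = a + a" "(a + b) - (a - b) = b + b"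
    by (simp_all add: algebra_simps)
  then have "a = h + d" "b = h + - d"
    unfolding h_def d_def
    by (metis scaleR_add_right scaleR_diff_right scaleR_half_double diff_conv_add_uminus)+
  then have "energy a + energy b = 2 * energy h + 2 * Re (q d d)"
    using energy_add[OF h d] energy_add[OF h md]
    by (simp add: uminus_left uminus_right f_scaleC[OF d, of "- 1", unfolded scaleC_minus_one])
  moreover have "q (a - b) (a - b) = 4 * q d d"
    unfolding d_def scaleR_scaleC by (simp add: scaleC_left scaleC_right)
  ultimately show ?thesis
    using coercive[OF csubspace_diff[OF csubspace a b]] lower[OF h] by simp
qed

lemma energy_local_bound:
  assumes x: "x \<in> S"
  shows "\<exists>K. \<forall>z\<in>S. energy x \<le> energy (x + z) + K * norm z"
proof -
  obtain C where C: "\<And>x y. cmod (q x y) \<le> C * norm x * norm y"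
    using bounded by blast
  obtain M where M: "\<forall>x\<in>S. cmod (f x) \<le> M * norm x"
    using f_bounded by blast
  have "energy x \<le> energy (x + z) + (2 * C * norm x + 2 * M) * norm z" if z: "z \<in> S" for z
  proof -
    have "- Re (q z x) \<le> C * norm z * norm x"
      using C[of z x] abs_Re_le_cmod[of "q z x"] by linarith
    moreover have "Re (f z) \<le> M * norm z"
      using M z complex_Re_le_cmod order_trans by blast
    ultimately show ?thesis
      using energy_add[OF x z] Re_nonneg[OF z] by (simp add: algebra_simps)
  qed
  then show ?thesis by blast
qed

lemma minimizing_sequence_Cauchy:
  assumes u: "\<And>n. u n \<in> S" and lower: "\<And>y. y \<in> S \<Longrightarrow> m \<le> energy y"
    and u_energy: "\<And>n. energy (u n) < m + inverse (real (Suc n))"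
  shows "Cauchy u"
proof (rule metric_CauchyI)
  fix e :: real assume e: "e > 0"
  obtain N :: nat where "4 / (c * e\<^sup>2) < real N"
    using reals_Archimedean2 by blast
  then have "4 / (c * e\<^sup>2) < real (Suc N)"
    by simp
  then have N: "4 < real (Suc N) * (c * e\<^sup>2)"
    using c_pos e by (simp add: divide_less_eq)
  have "dist (u j) (u k) < e" if "j \<ge> N" "k \<ge> N" for j k
  proof -
    have "inverse (real (Suc j)) \<le> inverse (real (Suc N))"
      and "inverse (real (Suc k)) \<le> inverse (real (Suc N))"
      using that by (simp_all add: le_imp_inverse_le)
    moreover have "c * (norm (u j - u k))\<^sup>2 \<le> 2 * (energy (u j) + energy (u k) - 2 * m)"
      by (intro energy_midpoint_bound u lower)
    ultimately have "c * (norm (u j - u k))\<^sup>2 < 4 * inverse (real (Suc N))"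
      using u_energy[of j] u_energy[of k] by argo
    also have "\<dots> < c * e\<^sup>2"
      using N by (simp add: field_split_simps)
    finally have "(norm (u j - u k))\<^sup>2 < e\<^sup>2"
      using c_pos by simp
    then show ?thesis
      using power_less_imp_less_base[of "norm (u j - u k)" 2 e] e by (simp add: dist_norm)
  qed
  then show "\<exists>N. \<forall>j\<ge>N. \<forall>k\<ge>N. dist (u j) (u k) < e" by blast
qed

lemma energy_limit_le:
  assumes u: "\<And>n. u n \<in> S" and lim: "u \<longlonglongrightarrow> u0" and u0: "u0 \<in> S"
    and u_energy: "\<And>n. energy (u n) < m + inverse (real (Suc n))"
  shows "energy u0 \<le> m"
proof -
  obtain K where K: "\<And>z. z \<in> S \<Longrightarrow> energy u0 \<le> energy (u0 + z) + K * norm z"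
    using energy_local_bound[OF u0] by blast
  have "energy u0 \<le> energy (u n) + K * norm (u n - u0)" for n
    using K[OF csubspace_diff[OF csubspace u[of n] u0]] by simp
  then have "energy u0 \<le> m + inverse (real (Suc n)) + K * norm (u n - u0)" for n
    using u_energy[of n] by (meson add_right_mono less_imp_le order_trans)
  moreover have "(\<lambda>n. m + inverse (real (Suc n)) + K * norm (u n - u0)) \<longlonglongrightarrow> m + 0 + K * 0"
    using lim by (intro tendsto_intros LIMSEQ_inverse_real_of_nat)
      (simp add: tendsto_norm_zero_iff LIM_zero_iff)
  ultimately show "energy u0 \<le> m"
    by (intro LIMSEQ_le_const[where X = "\<lambda>n. m + inverse (real (Suc n)) + K * norm (u n - u0)"])
      auto
qed

lemma energy_has_minimizer: "\<exists>u\<in>S. \<forall>y\<in>S. energy u \<le> energy y"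
proof -
  define m where "m = Inf (energy ` S)"
  have lower: "m \<le> energy y" if "y \<in> S" for y
    unfolding m_def using bdd_below_energy that by (simp add: cInf_lower)
  have "\<exists>x\<in>S. energy x < m + inverse (real (Suc n))" for n
  proof -
    have "Inf (energy ` S) < m + inverse (real (Suc n))"
      unfolding m_def by simp
    then show ?thesis
      using cInf_less_iff[of "energy ` S"] csubspace_0[OF csubspace] bdd_below_energy by auto
  qed
  then obtain u where u: "\<And>n. u n \<in> S"
    and u_energy: "\<And>n. energy (u n) < m + inverse (real (Suc n))"
    by metis
  obtain u0 where lim: "u \<longlonglongrightarrow> u0"
    using minimizing_sequence_Cauchy[OF u lower u_energy] Cauchy_convergent_iff convergent_def
    by blast
  have u0: "u0 \<in> S"
    using closed_sequentially[OF closed u lim] .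
  show ?thesis
    using energy_limit_le[OF u lim u0 u_energy] u0 lower by (meson order_trans)
qed

lemma minimizer_represents:
  assumes u: "u \<in> S" and minimal: "\<forall>y\<in>S. energy u \<le> energy y" and y: "y \<in> S"
  shows "q u y = f y"
proof -
  define d where "d = q y u - cnj (f y)"
  define A where "A = Re (q y y)"
  have variation: "0 \<le> 2 * Re (t * d) + (cmod t)\<^sup>2 * A" for t
  proof -
    have ty: "t *\<^sub>C y \<in> S"
      using csubspace_scaleC[OF csubspace y] .
    have "energy u \<le> energy (u + t *\<^sub>C y)"
      using minimal csubspace_add[OF csubspace u ty] by blast
    moreover have "Re (q (t *\<^sub>C y) u) - Re (f (t *\<^sub>C y)) = Re (t * d)"
      using f_scaleC[OF y, of t] by (simp add: d_def scaleC_left right_diff_distrib)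
    moreover have "q (t *\<^sub>C y) (t *\<^sub>C y) = (t * cnj t) * q y y"
      by (simp add: scaleC_left scaleC_right mult.assoc)
    then have "q (t *\<^sub>C y) (t *\<^sub>C y) = complex_of_real ((cmod t)\<^sup>2) * q y y"
      by (simp only: complex_norm_square)
    ultimately show ?thesis
      using energy_add[OF u ty] unfolding A_def by simp
  qed
  \<comment> \<open>For \<open>t = - s cnj d\<close> with \<open>s A < 1\<close> the linear term dominates.\<close>
  define s where "s = 1 / (A + 1)"
  have A: "0 \<le> A"
    unfolding A_def using Re_nonneg[OF y] .
  then have s: "0 < s" "s * A < 1"
    unfolding s_def by (simp_all add: field_simps)
  have "cnj d * d = complex_of_real ((cmod d)\<^sup>2)"
    by (simp only: complex_norm_square mult.commute)
  then have td: "- (complex_of_real s * cnj d) * d = complex_of_real (- s * (cmod d)\<^sup>2)"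
    by (simp add: mult.assoc)
  have "0 \<le> 2 * (- s * (cmod d)\<^sup>2) + (s * cmod d)\<^sup>2 * A"
    using variation[of "- (complex_of_real s * cnj d)", unfolded td] s by (simp add: norm_mult)
  also have "\<dots> = s * (cmod d)\<^sup>2 * (s * A - 2)"
    by (simp add: algebra_simps power2_eq_square)
  finally have "(cmod d)\<^sup>2 \<le> 0"
    using s by (simp add: zero_le_mult_iff mult_le_0_iff)
  then have "q y u = cnj (f y)"
    by (simp add: d_def)
  then show ?thesis
    by (simp add: hermitian[of y u])
qed

theorem representation: "\<exists>u\<in>S. \<forall>y\<in>S. q u y = f y"
  using energy_has_minimizer minimizer_represents by blast

end

section \<open>Symplectic forms and maximal positive subspaces\<close>

lemma
  assumes "L \<in> Wplus sf"
  shows Wplus_closed: "closed L"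
    and Wplus_csubspace: "csubspace L"
    and Wplus_pos_def: "pos_def_sub sf L"
    and Wplus_coercive: "\<exists>c>0. \<forall>x\<in>L. c * (norm x)\<^sup>2 \<le> Re (- \<i> * sf x x)"
    and Wplus_maximal: "csubspace M \<Longrightarrow> L \<subseteq> M \<Longrightarrow> pos_def_sub sf M \<Longrightarrow> M = L"
  using assms unfolding Wplus_def by auto

lemma pos_def_sub_nonpos_eq_0:
  "pos_def_sub sf L \<Longrightarrow> x \<in> L \<Longrightarrow> Re (- \<i> * sf x x) \<le> 0 \<Longrightarrow> x = 0"
  unfolding pos_def_sub_def by (meson not_less)

locale symplectic_form =
  fixes sf :: "'h::chilbert \<Rightarrow> 'h \<Rightarrow> complex"
  assumes strong_symplectic: "strong_symplectic sf"
begin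

lemma sf_add_left: "sf (x + y) z = sf x z + sf y z"
  and sf_scaleC_left: "sf (a *\<^sub>C x) y = a * sf x y"
  and sf_skew: "sf y x = - cnj (sf x y)"
  and sf_nondegenerate: "(\<And>y. sf y x = 0) \<Longrightarrow> x = 0"
proof -
  note axioms = strong_symplectic[unfolded strong_symplectic_def]
  show "sf (x + y) z = sf x z + sf y z"
    using axioms[THEN conjunct1] by blast
  show "sf (a *\<^sub>C x) y = a * sf x y"
    using axioms[THEN conjunct2, THEN conjunct1] by blast
  show "sf y x = - cnj (sf x y)"
    using axioms[THEN conjunct2, THEN conjunct2, THEN conjunct1] by blast
  show "(\<And>y. sf y x = 0) \<Longrightarrow> x = 0"
    using axioms[THEN conjunct2, THEN conjunct2, THEN conjunct2, THEN conjunct2, THEN conjunct1]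
    by blast
qed

lemma sf_bounded: "\<exists>C\<ge>0. \<forall>x y. cmod (sf x y) \<le> C * norm x * norm y"
proof -
  obtain C where C: "\<And>x y. cmod (sf x y) \<le> C * norm x * norm y"
    using strong_symplectic unfolding strong_symplectic_def
    by (elim conjE) blast
  have "cmod (sf x y) \<le> max C 0 * norm x * norm y" for x y
    using C[of x y] mult_right_mono[of C "max C 0" "norm x * norm y"] by (simp add: mult.assoc)
  then show ?thesis
    by (intro exI[of _ "max C 0"]) simp
qed

lemma sf_add_right: "sf x (y + z) = sf x y + sf x z"
  using sf_skew[of x "y + z"] sf_skew[of x y] sf_skew[of x z] by (simp add: sf_add_left)

lemma sf_scaleC_right: "sf x (a *\<^sub>C y) = cnj a * sf x y"
  using sf_skew[of x "a *\<^sub>C y"] sf_skew[of x y] by (simp add: sf_scaleC_left)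

lemma sf_diff_left: "sf (x - y) z = sf x z - sf y z"
  using sf_add_left[of x "(- 1) *\<^sub>C y" z] sf_scaleC_left[of "- 1" y z]
  by (simp add: scaleC_minus_one)

lemma sf_diff_right: "sf x (y - z) = sf x y - sf x z"
  using sf_add_right[of x y "(- 1) *\<^sub>C z"] sf_scaleC_right[of x "- 1" z]
  by (simp add: scaleC_minus_one)

lemma sf_zero_left [simp]: "sf 0 y = 0"
  using sf_diff_left[of 0 0 y] by simp

lemma sperpD: "x \<in> sperp sf S \<Longrightarrow> y \<in> S \<Longrightarrow> sf x y = 0"
  by (simp add: sperp_def)

lemma sperpD': "x \<in> sperp sf S \<Longrightarrow> y \<in> S \<Longrightarrow> sf y x = 0"
  using sf_skew[of y x] by (simp add: sperp_def)

lemma csubspace_sperp: "csubspace (sperp sf S)"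
  unfolding csubspace_def sperp_def by (simp add: sf_add_left sf_scaleC_left)

lemma closed_sperp: "closed (sperp sf S)"
proof -
  obtain C where C: "\<And>x y. cmod (sf x y) \<le> C * norm x * norm y"
    using sf_bounded by blast
  have "bounded_linear (\<lambda>x. sf x y)" for y
  proof (rule bounded_linear_intro[where K = "C * norm y"])
    show "sf (x + z) y = sf x y + sf z y" for x z
      by (rule sf_add_left)
    show "sf (r *\<^sub>R x) y = r *\<^sub>R sf x y" for r x
      by (simp add: scaleR_scaleC sf_scaleC_left scaleR_conv_of_real)
    show "norm (sf x y) \<le> norm x * (C * norm y)" for x
      using C[of x y] by (simp add: mult_ac)
  qed
  then have "closed {x. sf x y = 0}" for y
    by (intro closed_Collect_eq) (auto intro: linear_continuous_on)
  moreover have "sperp sf S = (\<Inter>y\<in>S. {x. sf x y = 0})"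
    unfolding sperp_def by blast
  ultimately show ?thesis by auto
qed

lemma Wplus_sf_representation:
  assumes L: "L \<in> Wplus sf" and S: "S \<subseteq> L" "closed S" "csubspace S"
    and f_add: "\<And>x y. x \<in> S \<Longrightarrow> y \<in> S \<Longrightarrow> f (x + y) = f x + f y"
    and f_scaleC: "\<And>a x. x \<in> S \<Longrightarrow> f (a *\<^sub>C x) = cnj a * f x"
    and f_bounded: "\<exists>M. \<forall>x\<in>S. cmod (f x) \<le> M * norm x"
  shows "\<exists>u\<in>S. \<forall>y\<in>S. - \<i> * sf u y = f y"
proof -
  obtain c where c: "c > 0" "\<forall>x\<in>L. c * (norm x)\<^sup>2 \<le> Re (- \<i> * sf x x)"
    using Wplus_coercive[OF L] by blast
  interpret riesz_problem "\<lambda>x y. - \<i> * sf x y" S c f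
  proof
    show "- \<i> * sf (x + y) z = - \<i> * sf x z + - \<i> * sf y z" for x y z
      by (simp add: sf_add_left ring_distribs)
    show "- \<i> * sf (a *\<^sub>C x) y = a * (- \<i> * sf x y)" for a x y
      by (simp add: sf_scaleC_left)
    show "- \<i> * sf y x = cnj (- \<i> * sf x y)" for x y
      by (simp add: sf_skew[of y x])
    show "\<exists>C. \<forall>x y. cmod (- \<i> * sf x y) \<le> C * norm x * norm y"
      using sf_bounded by (auto simp: norm_mult)
  qed (use S c f_add f_scaleC f_bounded in auto)
  show ?thesis
    using representation .
qed

lemma Wplus_sf_projection:
  assumes "L \<in> Wplus sf" "S \<subseteq> L" "closed S" "csubspace S"
  shows "\<exists>u\<in>S. \<forall>y\<in>S. sf u y = sf w y"
proof -
  obtain C where C: "\<And>x y. cmod (sf x y) \<le> C * norm x * norm y"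
    using sf_bounded by blast
  have "\<exists>u\<in>S. \<forall>y\<in>S. - \<i> * sf u y = - \<i> * sf w y"
  proof (rule Wplus_sf_representation[OF assms])
    show "- \<i> * sf w (x + y) = - \<i> * sf w x + - \<i> * sf w y" for x y
      by (simp add: sf_add_right ring_distribs)
    show "- \<i> * sf w (a *\<^sub>C x) = cnj a * (- \<i> * sf w x)" for a x
      by (simp add: sf_scaleC_right)
    show "\<exists>M. \<forall>x\<in>S. cmod (- \<i> * sf w x) \<le> M * norm x"
      using C by (intro exI[of _ "C * norm w"]) (simp add: norm_mult)
  qed
  then show ?thesis by simp
qed

lemma Wplus_decomp:
  assumes "L \<in> Wplus sf"
  shows "\<exists>n\<in>L. w - n \<in> sperp sf L"
proof -
  obtain n where n: "n \<in> L" "\<forall>y\<in>L. sf n y = sf w y"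
    using Wplus_sf_projection[OF assms order.refl Wplus_closed Wplus_csubspace] assms by blast
  then have "w - n \<in> sperp sf L"
    unfolding sperp_def by (simp add: sf_diff_left)
  with n show ?thesis by blast
qed

lemma Wplus_inter_sperp: "L \<in> Wplus sf \<Longrightarrow> x \<in> L \<Longrightarrow> x \<in> sperp sf L \<Longrightarrow> x = 0"
  using Wplus_pos_def sperpD unfolding pos_def_sub_def by fastforce

lemma Wplus_decomp_unique:
  assumes L: "L \<in> Wplus sf"
  shows "\<exists>!n. n \<in> L \<and> w - n \<in> sperp sf L"
proof -
  obtain n where n: "n \<in> L" "w - n \<in> sperp sf L"
    using Wplus_decomp[OF L] by blast
  have "n' = n" if "n' \<in> L" "w - n' \<in> sperp sf L" for n'
  proof -
    have "n' - n \<in> L"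
      using csubspace_diff[OF Wplus_csubspace[OF L] that(1) n(1)] .
    moreover have "n' - n = (w - n) - (w - n')"
      by simp
    then have "n' - n \<in> sperp sf L"
      using csubspace_diff[OF csubspace_sperp n(2) that(2)] by simp
    ultimately have "n' - n = 0"
      using Wplus_inter_sperp[OF L] by blast
    then show "n' = n" by simp
  qed
  then show ?thesis
    using n by blast
qed

lemma Wplus_sf_injective:
  assumes L: "L \<in> Wplus sf" and "u \<in> L" "v \<in> L" and eq: "\<And>x. x \<in> L \<Longrightarrow> sf u x = sf v x"
  shows "u = v"
proof -
  have "u - v \<in> sperp sf L"
    unfolding sperp_def using eq by (simp add: sf_diff_left)
  then show ?thesis
    using Wplus_inter_sperp[OF L csubspace_diff[OF Wplus_csubspace[OF L] assms(2,3)]] by simp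
qed

lemma sperp_Wplus_sf_injective:
  assumes L: "L \<in> Wplus sf" and u: "u \<in> sperp sf L" and v: "v \<in> sperp sf L"
    and eq: "\<And>x. x \<in> sperp sf L \<Longrightarrow> sf u x = sf v x"
  shows "u = v"
proof -
  have "sf y (u - v) = 0" for y
  proof -
    obtain n where n: "n \<in> L" "y - n \<in> sperp sf L"
      using Wplus_decomp[OF L] by blast
    have "sf (u - v) y = sf (u - v) n + sf (u - v) (y - n)"
      by (simp add: sf_diff_right)
    also have "\<dots> = 0"
      using sperpD[OF csubspace_diff[OF csubspace_sperp u v] n(1)] eq[OF n(2)]
      by (simp add: sf_diff_left)
    finally show ?thesis
      using sf_skew[of y "u - v"] by simp
  qed
  then show ?thesis
    using sf_nondegenerate[of "u - v"] by simp
qed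

lemma pos_def_sub_extend:
  assumes L: "pos_def_sub sf L" and h: "\<And>n. n \<in> L \<Longrightarrow> sf h n = 0"
    and h_pos: "0 < Re (- \<i> * sf h h)"
  shows "pos_def_sub sf {n + a *\<^sub>C h |n a. n \<in> L}"
  unfolding pos_def_sub_def
proof (intro ballI impI)
  fix x assume "x \<in> {n + a *\<^sub>C h |n a. n \<in> L}" and x: "x \<noteq> 0"
  then obtain n a where x_eq: "x = n + a *\<^sub>C h" and n: "n \<in> L"
    by blast
  have "sf n h = 0"
    using h[OF n] sf_skew[of n h] by simp
  then have "sf x x = sf n n + (a * cnj a) * sf h h"
    unfolding x_eq by (simp add: sf_add_left sf_add_right sf_scaleC_left sf_scaleC_right h[OF n])
  also have "a * cnj a = complex_of_real ((cmod a)\<^sup>2)"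
    by (simp only: complex_norm_square)
  finally have "Re (- \<i> * sf x x) = Re (- \<i> * sf n n) + (cmod a)\<^sup>2 * Re (- \<i> * sf h h)"
    by (simp add: ring_distribs)
  moreover have "0 \<le> Re (- \<i> * sf n n)" and "n \<noteq> 0 \<Longrightarrow> 0 < Re (- \<i> * sf n n)"
    using L n unfolding pos_def_sub_def by (cases "n = 0"; force)+
  moreover have "n = 0 \<Longrightarrow> a \<noteq> 0"
    using x x_eq by auto
  moreover have "0 \<le> (cmod a)\<^sup>2 * Re (- \<i> * sf h h)" and "a \<noteq> 0 \<Longrightarrow> 0 < (cmod a)\<^sup>2 * Re (- \<i> * sf h h)"
    using h_pos by simp_all
  ultimately show "0 < Re (- \<i> * sf x x)"
    by (cases "n = 0") auto
qed

lemma sperp_Wplus_nonpos: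
  assumes L: "L \<in> Wplus sf" and h: "h \<in> sperp sf L"
  shows "Re (- \<i> * sf h h) \<le> 0"
proof (rule ccontr)
  assume "\<not> Re (- \<i> * sf h h) \<le> 0"
  then have h_pos: "0 < Re (- \<i> * sf h h)"
    by simp
  define M where "M = {n + a *\<^sub>C h |n a. n \<in> L}"
  have "M = L"
  proof (rule Wplus_maximal[OF L])
    show "csubspace M"
      unfolding M_def using csubspace_extend[OF Wplus_csubspace[OF L]] .
    show "L \<subseteq> M"
      unfolding M_def by (force intro: exI[of _ 0])
    show "pos_def_sub sf M"
      unfolding M_def using pos_def_sub_extend[OF Wplus_pos_def[OF L] sperpD[OF h] h_pos] .
  qed
  moreover have "h \<in> M"
    unfolding M_def using csubspace_0[OF Wplus_csubspace[OF L]]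
    by (intro CollectI exI[of _ 0] exI[of _ 1]) (simp add: scaleC_one)
  ultimately have "h = 0"
    using Wplus_inter_sperp[OF L _ h] by simp
  then show False
    using h_pos by simp
qed

end

section \<open>Nevanlinna discs as graphs over H_+\<close>

locale nevanlinna = symplectic_form sf for sf :: "'h::chilbert \<Rightarrow> 'h \<Rightarrow> complex" +
  fixes N :: "complex \<Rightarrow> 'h set"
  assumes nevanlinna_disc: "nevanlinna_disc sf N"
begin

lemma N_Wplus: "l \<in> ball 0 1 \<Longrightarrow> N l \<in> Wplus sf"
  using nevanlinna_disc unfolding nevanlinna_disc_def by blast

lemma N0_Wplus: "N 0 \<in> Wplus sf"
  using N_Wplus by simp

lemma graph_norm_bound:
  assumes l: "l \<in> ball 0 1"
  shows "\<exists>K. \<forall>a\<in>N 0. \<forall>b\<in>sperp sf (N 0). a + b \<in> N l \<longrightarrow> norm (a + b) \<le> K * norm a"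
proof -
  obtain c where c: "c > 0" "\<forall>x\<in>N l. c * (norm x)\<^sup>2 \<le> Re (- \<i> * sf x x)"
    using Wplus_coercive[OF N_Wplus[OF l]] by blast
  obtain C where C: "\<And>x y. cmod (sf x y) \<le> C * norm x * norm y"
    using sf_bounded by blast
  have "norm (a + b) \<le> sqrt (C / c) * norm a"
    if a: "a \<in> N 0" and b: "b \<in> sperp sf (N 0)" and ab: "a + b \<in> N l" for a b
  proof -
    have "sf (a + b) (a + b) = sf a a + sf b b"
      using sperpD[OF b a] sperpD'[OF b a] by (simp add: sf_add_left sf_add_right)
    moreover have "c * (norm (a + b))\<^sup>2 \<le> Re (- \<i> * sf (a + b) (a + b))"
      using c(2) ab by blast
    ultimately have "c * (norm (a + b))\<^sup>2 \<le> Re (- \<i> * sf a a) + Re (- \<i> * sf b b)"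
      by (simp add: ring_distribs)
    also have "\<dots> \<le> cmod (sf a a)"
      using sperp_Wplus_nonpos[OF N0_Wplus b] abs_Im_le_cmod[of "sf a a"] by simp
    also have "\<dots> \<le> C * (norm a)\<^sup>2"
      using C[of a a] by (simp add: power2_eq_square mult.assoc)
    finally have "(norm (a + b))\<^sup>2 \<le> C / c * (norm a)\<^sup>2"
      using c(1) by (simp add: field_simps)
    then have "norm (a + b) \<le> sqrt (C / c * (norm a)\<^sup>2)"
      by (rule real_le_rsqrt)
    also have "\<dots> = sqrt (C / c) * norm a"
      by (simp only: real_sqrt_mult real_sqrt_abs abs_norm_cancel)
    finally show ?thesis .
  qed
  then show ?thesis by blast
qed

(* The projection of N l to H_+ along H_-; by graph_domain_eq it is all of H_+, so N l is the
   graph of nevB l. *)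

definition graph_domain :: "complex \<Rightarrow> 'h set" where
  "graph_domain l = {a \<in> N 0. \<exists>b\<in>sperp sf (N 0). a + b \<in> N l}"

lemma csubspace_graph_domain:
  assumes l: "l \<in> ball 0 1"
  shows "csubspace (graph_domain l)"
proof -
  note N0 = Wplus_csubspace[OF N0_Wplus] and Nl = Wplus_csubspace[OF N_Wplus[OF l]]
  show ?thesis
    unfolding csubspace_def
  proof (intro conjI ballI allI)
  show "0 \<in> graph_domain l"
    unfolding graph_domain_def
    using csubspace_0[OF N0] csubspace_0[OF csubspace_sperp] csubspace_0[OF Nl]
    by force
next
  fix u v assume "u \<in> graph_domain l" "v \<in> graph_domain l"
  then obtain b1 b2 where "u \<in> N 0" "v \<in> N 0" "b1 \<in> sperp sf (N 0)" "b2 \<in> sperp sf (N 0)"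
    "u + b1 \<in> N l" "v + b2 \<in> N l"
    unfolding graph_domain_def by blast
  moreover have "(u + v) + (b1 + b2) = (u + b1) + (v + b2)"
    by (simp add: algebra_simps)
  ultimately have "u + v \<in> N 0" "b1 + b2 \<in> sperp sf (N 0)" "(u + v) + (b1 + b2) \<in> N l"
    by (metis csubspace_add[OF N0] csubspace_add[OF csubspace_sperp] csubspace_add[OF Nl])+
  then show "u + v \<in> graph_domain l"
    unfolding graph_domain_def by blast
next
  fix a u assume "u \<in> graph_domain l"
  then obtain b where "u \<in> N 0" "b \<in> sperp sf (N 0)" "u + b \<in> N l"
    unfolding graph_domain_def by blast
  moreover have "a *\<^sub>C u + a *\<^sub>C b = a *\<^sub>C (u + b)"
    by (simp add: scaleC_add_right)
  ultimately have "a *\<^sub>C u \<in> N 0" "a *\<^sub>C b \<in> sperp sf (N 0)" "a *\<^sub>C u + a *\<^sub>C b \<in> N l"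
    using csubspace_scaleC[OF N0] csubspace_scaleC[OF Nl] csubspace_scaleC[OF csubspace_sperp]
    by simp_all
  then show "a *\<^sub>C u \<in> graph_domain l"
    unfolding graph_domain_def by blast
  qed
qed

lemma closed_graph_domain:
  assumes l: "l \<in> ball 0 1"
  shows "closed (graph_domain l)"
  unfolding closed_sequential_limits
proof (intro allI impI)
  fix s r assume "(\<forall>n. s n \<in> graph_domain l) \<and> s \<longlonglongrightarrow> r"
  then have s: "\<And>n. s n \<in> N 0" and lim: "s \<longlonglongrightarrow> r"
    and "\<forall>n. \<exists>b\<in>sperp sf (N 0). s n + b \<in> N l"
    unfolding graph_domain_def by auto
  then obtain b where b: "\<And>n. b n \<in> sperp sf (N 0)" and sb: "\<And>n. s n + b n \<in> N l"
    by metis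
  obtain K where K: "\<forall>a\<in>N 0. \<forall>b\<in>sperp sf (N 0). a + b \<in> N l \<longrightarrow> norm (a + b) \<le> K * norm a"
    using graph_norm_bound[OF l] by blast
  have "Cauchy (\<lambda>n. s n + b n)"
  proof (rule Cauchy_dominated[OF LIMSEQ_imp_Cauchy[OF lim]])
    fix j k
    have eq: "(s j + b j) - (s k + b k) = (s j - s k) + (b j - b k)"
      by (simp add: algebra_simps)
    have "s j - s k \<in> N 0" "b j - b k \<in> sperp sf (N 0)" "(s j - s k) + (b j - b k) \<in> N l"
      using csubspace_diff[OF Wplus_csubspace[OF N0_Wplus] s[of j] s[of k]]
        csubspace_diff[OF csubspace_sperp b[of j] b[of k]]
        csubspace_diff[OF Wplus_csubspace[OF N_Wplus[OF l]] sb[of j] sb[of k], unfolded eq] .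
    then show "norm ((s j + b j) - (s k + b k)) \<le> K * norm (s j - s k)"
      unfolding eq using K by blast
  qed
  then obtain g where g: "(\<lambda>n. s n + b n) \<longlonglongrightarrow> g"
    using Cauchy_convergent_iff convergent_def by blast
  have "g \<in> N l"
    using closed_sequentially[OF Wplus_closed[OF N_Wplus[OF l]] sb g] .
  moreover have "r \<in> N 0"
    using closed_sequentially[OF Wplus_closed[OF N0_Wplus] s lim] .
  moreover have "b \<longlonglongrightarrow> g - r"
    using tendsto_diff[OF g lim] by simp
  then have "g - r \<in> sperp sf (N 0)"
    using closed_sequentially[OF closed_sperp] b by blast
  ultimately show "r \<in> graph_domain l"
    unfolding graph_domain_def by (intro CollectI conjI bexI[of _ "g - r"]) simp_all
qed

lemma graph_domain_eq:
  assumes l: "l \<in> ball 0 1"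
  shows "graph_domain l = N 0"
proof
  show R: "graph_domain l \<subseteq> N 0"
    unfolding graph_domain_def by blast
  show "N 0 \<subseteq> graph_domain l"
  proof
    fix x assume x: "x \<in> N 0"
    obtain r where r: "r \<in> graph_domain l" "\<forall>y\<in>graph_domain l. sf r y = sf x y"
      using Wplus_sf_projection[OF N0_Wplus R closed_graph_domain[OF l] csubspace_graph_domain[OF l]]
      by blast
    define h where "h = x - r"
    have h: "h \<in> N 0"
      unfolding h_def using csubspace_diff[OF Wplus_csubspace[OF N0_Wplus] x] r(1) R by blast
    have "h \<in> sperp sf (N l)"
      unfolding sperp_def
    proof (intro CollectI ballI)
      fix n assume n: "n \<in> N l"
      obtain n0 where n0: "n0 \<in> N 0" "n - n0 \<in> sperp sf (N 0)"
        using Wplus_decomp[OF N0_Wplus] by blast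
      then have "n0 \<in> graph_domain l"
        unfolding graph_domain_def using n by force
      then have "sf h n0 = 0"
        using r(2) by (simp add: h_def sf_diff_left)
      moreover have "sf h (n - n0) = 0"
        using sperpD'[OF n0(2) h] .
      ultimately show "sf h n = 0"
        by (simp add: sf_diff_right)
    qed
    then have "h = 0"
      using pos_def_sub_nonpos_eq_0[OF Wplus_pos_def[OF N0_Wplus] h]
        sperp_Wplus_nonpos[OF N_Wplus[OF l]]
      by blast
    then show "x \<in> graph_domain l"
      using r(1) by (simp add: h_def)
  qed
qed

lemma graph_unique:
  assumes l: "l \<in> ball 0 1" and y: "y1 \<in> sperp sf (N 0)" "y2 \<in> sperp sf (N 0)"
    and graph: "x + y1 \<in> N l" "x + y2 \<in> N l"
  shows "y1 = y2"
proof -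
  have "y1 - y2 \<in> N l"
    using csubspace_diff[OF Wplus_csubspace[OF N_Wplus[OF l]] graph] by simp
  moreover have "y1 - y2 \<in> sperp sf (N 0)"
    using csubspace_diff[OF csubspace_sperp y] .
  ultimately have "y1 - y2 = 0"
    using pos_def_sub_nonpos_eq_0[OF Wplus_pos_def[OF N_Wplus[OF l]]]
      sperp_Wplus_nonpos[OF N0_Wplus]
    by blast
  then show ?thesis by simp
qed

lemma nevB_eqI:
  assumes l: "l \<in> ball 0 1" and y: "y \<in> sperp sf (N 0)" and graph: "x + y \<in> N l"
  shows "nevB sf N l x = y"
  unfolding nevB_def Hm_def
proof (rule the_equality)
  show "y \<in> sperp sf (N 0) \<and> x + y \<in> N l"
    using y graph by simp
  show "y' = y" if "y' \<in> sperp sf (N 0) \<and> x + y' \<in> N l" for y'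
    using graph_unique[OF l _ y _ graph] that by blast
qed

lemma
  assumes l: "l \<in> ball 0 1" and x: "x \<in> N 0"
  shows nevB_sperp: "nevB sf N l x \<in> sperp sf (N 0)"
    and nevB_graph: "x + nevB sf N l x \<in> N l"
proof -
  obtain y where "y \<in> sperp sf (N 0)" "x + y \<in> N l"
    using graph_domain_eq[OF l] x unfolding graph_domain_def by blast
  then show "nevB sf N l x \<in> sperp sf (N 0)" "x + nevB sf N l x \<in> N l"
    using nevB_eqI[OF l] by simp_all
qed

lemma nevB_add:
  assumes l: "l \<in> ball 0 1" and x: "x1 \<in> N 0" "x2 \<in> N 0"
  shows "nevB sf N l (x1 + x2) = nevB sf N l x1 + nevB sf N l x2"
proof (rule nevB_eqI[OF l])
  show "nevB sf N l x1 + nevB sf N l x2 \<in> sperp sf (N 0)"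
    using csubspace_add[OF csubspace_sperp nevB_sperp[OF l x(1)] nevB_sperp[OF l x(2)]] .
  have eq: "x1 + x2 + (nevB sf N l x1 + nevB sf N l x2)
    = (x1 + nevB sf N l x1) + (x2 + nevB sf N l x2)"
    by (simp add: algebra_simps)
  show "x1 + x2 + (nevB sf N l x1 + nevB sf N l x2) \<in> N l"
    unfolding eq
    using csubspace_add[OF Wplus_csubspace[OF N_Wplus[OF l]]
        nevB_graph[OF l x(1)] nevB_graph[OF l x(2)]] .
qed

lemma nevB_scaleC:
  assumes l: "l \<in> ball 0 1" and x: "x \<in> N 0"
  shows "nevB sf N l (a *\<^sub>C x) = a *\<^sub>C nevB sf N l x"
proof (rule nevB_eqI[OF l])
  show "a *\<^sub>C nevB sf N l x \<in> sperp sf (N 0)"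
    using csubspace_scaleC[OF csubspace_sperp nevB_sperp[OF l x]] .
  show "a *\<^sub>C x + a *\<^sub>C nevB sf N l x \<in> N l"
    using csubspace_scaleC[OF Wplus_csubspace[OF N_Wplus[OF l]] nevB_graph[OF l x]]
    by (simp add: scaleC_add_right)
qed

lemma nevB_bounded:
  assumes l: "l \<in> ball 0 1"
  shows "\<exists>K. \<forall>x\<in>N 0. norm (nevB sf N l x) \<le> K * norm x"
proof -
  obtain K where K: "\<forall>a\<in>N 0. \<forall>b\<in>sperp sf (N 0). a + b \<in> N l \<longrightarrow> norm (a + b) \<le> K * norm a"
    using graph_norm_bound[OF l] by blast
  have "norm (nevB sf N l x) \<le> (K + 1) * norm x" if x: "x \<in> N 0" for x
  proof -
    have "norm (nevB sf N l x) \<le> norm (x + nevB sf N l x) + norm x"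
      using norm_triangle_ineq4[of "x + nevB sf N l x" x] by simp
    also have "\<dots> \<le> (K + 1) * norm x"
      using K x nevB_sperp[OF l x] nevB_graph[OF l x] by (simp add: algebra_simps)
    finally show ?thesis .
  qed
  then show ?thesis by blast
qed

lemma sf_nevB_bounded:
  assumes l: "l \<in> ball 0 1"
  shows "\<exists>M. \<forall>u\<in>N 0. cmod (sf y (nevB sf N l u)) \<le> M * norm u"
proof -
  obtain C where "C \<ge> 0" and C: "\<And>x y. cmod (sf x y) \<le> C * norm x * norm y"
    using sf_bounded by blast
  obtain K where K: "\<forall>x\<in>N 0. norm (nevB sf N l x) \<le> K * norm x"
    using nevB_bounded[OF l] by blast
  have "cmod (sf y (nevB sf N l u)) \<le> (C * norm y * K) * norm u" if "u \<in> N 0" for u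
  proof -
    have "cmod (sf y (nevB sf N l u)) \<le> C * norm y * norm (nevB sf N l u)"
      by (rule C)
    also have "\<dots> \<le> C * norm y * (K * norm u)"
      using K that \<open>C \<ge> 0\<close> by (intro mult_left_mono) simp_all
    finally show ?thesis
      by (simp add: mult.assoc)
  qed
  then show ?thesis by blast
qed

lemma nevBadj_eqI:
  assumes l: "l \<in> ball 0 1" and z: "z \<in> N 0"
    and adjoint: "\<And>x. x \<in> N 0 \<Longrightarrow> sf z x = - sf y (nevB sf N l x)"
  shows "nevBadj sf N l y = z"
  unfolding nevBadj_def Hp_def ipp_def ipm_def
proof (rule the_equality)
  show "z \<in> N 0 \<and> (\<forall>x\<in>N 0. - \<i> * sf z x = \<i> * sf y (nevB sf N l x))"
    using z adjoint by simp
  show "z' = z" if "z' \<in> N 0 \<and> (\<forall>x\<in>N 0. - \<i> * sf z' x = \<i> * sf y (nevB sf N l x))" for z'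
    using that z adjoint
    by (intro Wplus_sf_injective[OF N0_Wplus]) (auto simp: minus_i_mult_eq_i_mult_iff)
qed

lemma
  assumes l: "l \<in> ball 0 1"
  shows nevBadj_N0: "nevBadj sf N l y \<in> N 0"
    and nevBadj_adjoint: "x \<in> N 0 \<Longrightarrow> sf (nevBadj sf N l y) x = - sf y (nevB sf N l x)"
proof -
  have "\<exists>z\<in>N 0. \<forall>x\<in>N 0. - \<i> * sf z x = \<i> * sf y (nevB sf N l x)"
  proof (rule Wplus_sf_representation[OF N0_Wplus order.refl Wplus_closed Wplus_csubspace])
    show "\<i> * sf y (nevB sf N l (u + v)) = \<i> * sf y (nevB sf N l u) + \<i> * sf y (nevB sf N l v)"
      if "u \<in> N 0" "v \<in> N 0" for u v
      using nevB_add[OF l that] by (simp add: sf_add_right ring_distribs)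
    show "\<i> * sf y (nevB sf N l (a *\<^sub>C u)) = cnj a * (\<i> * sf y (nevB sf N l u))"
      if "u \<in> N 0" for a u
      using nevB_scaleC[OF l that] by (simp add: sf_scaleC_right)
    show "\<exists>M. \<forall>u\<in>N 0. cmod (\<i> * sf y (nevB sf N l u)) \<le> M * norm u"
      using sf_nevB_bounded[OF l] by (simp add: norm_mult)
  qed (use N0_Wplus in auto)
  then obtain z where z: "z \<in> N 0" "\<forall>x\<in>N 0. sf z x = - sf y (nevB sf N l x)"
    by (auto simp: minus_i_mult_eq_i_mult_iff)
  then have "nevBadj sf N l y = z"
    by (intro nevBadj_eqI[OF l]) simp_all
  then show "nevBadj sf N l y \<in> N 0" "x \<in> N 0 \<Longrightarrow> sf (nevBadj sf N l y) x = - sf y (nevB sf N l x)"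
    using z by simp_all
qed

end

section \<open>The localized kernel\<close>

definition kernel_factor :: "bool \<times> complex \<Rightarrow> bool \<times> complex \<Rightarrow> complex" where
  "kernel_factor p q =
     (if fst p = fst q then 1 / (1 - snd p * cnj (snd q)) else - 1 / (snd p - cnj (snd q)))"

lemma kern_eq: "kern sf N p q w y = kernel_factor p q * Fdag_ip sf p (projP sf N p w) y"
  by (simp add: kern_def Qop_def kernel_factor_def)

lemma cnj_in_ball: "l \<in> ball 0 1 \<Longrightarrow> cnj l \<in> ball (0::complex) 1"
  by simp

lemma lockern_same_sheet: "lockern sf N (s, l) (s, m) x = lockern_raw sf N (s, l) (s, m) x"
  by (simp add: lockern_def)

lemma lockern_opposite_sheets:
  assumes st: "s \<noteq> t" and l: "l \<in> ball 0 1" and m: "m \<in> ball 0 1"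
    and raw: "\<And>l. l \<in> ball 0 1 \<Longrightarrow> l \<noteq> cnj m \<Longrightarrow> lockern_raw sf N (s, l) (t, m) x = g l"
  shows "lockern sf N (s, l) (t, m) x = (if l \<noteq> cnj m then g l else Lim (at (cnj m)) g)"
proof (cases "l = cnj m")
  case True
  have "eventually (\<lambda>l'. l' \<in> ball 0 1 - {cnj m}) (at (cnj m))"
    using eventually_at_in_open[OF open_ball cnj_in_ball[OF m]] .
  then have "eventually (\<lambda>l'. lockern_raw sf N (s, l') (t, m) x = g l') (at (cnj m))"
    by (rule eventually_mono) (simp add: raw)
  then show ?thesis
    using True st Lim_cong[OF _ refl] by (simp add: lockern_def)
next
  case False
  then show ?thesis
    using raw[OF l] by (simp add: lockern_def)
qed

context nevanlinna
begin

lemma sf_nevBadj_right: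
  assumes l: "l \<in> ball 0 1" and z: "z \<in> N 0"
  shows "sf z (nevBadj sf N l y) = - sf (nevB sf N l z) y"
  using nevBadj_adjoint[OF l z, of y] sf_skew[of z "nevBadj sf N l y"] sf_skew[of "nevB sf N l z" y]
  by simp

lemma nevBadj_graph_sperp:
  assumes l: "l \<in> ball 0 1" and x: "x \<in> sperp sf (N 0)"
  shows "nevBadj sf N l x + x \<in> sperp sf (N l)"
  unfolding sperp_def
proof (intro CollectI ballI)
  fix n assume n: "n \<in> N l"
  obtain a where a: "a \<in> N 0" "n - a \<in> sperp sf (N 0)"
    using Wplus_decomp[OF N0_Wplus] by blast
  then have "nevB sf N l a = n - a"
    using nevB_eqI[OF l] n by simp
  then have "n = a + nevB sf N l a"
    by simp
  then show "sf (nevBadj sf N l x + x) n = 0"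
    using nevBadj_adjoint[OF l a(1)] sperpD'[OF nevB_sperp[OF l a(1)] nevBadj_N0[OF l]]
      sperpD[OF x a(1)]
    by (simp add: sf_add_left sf_add_right)
qed

lemma sf_projP_True:
  assumes l: "l \<in> ball 0 1" and g: "g \<in> sperp sf (N l)"
  shows "sf (projP sf N (True, l) w) g = sf w g"
proof -
  obtain n where n: "n \<in> N l" "w - n \<in> sperp sf (N l)"
    and unique: "\<And>n'. n' \<in> N l \<Longrightarrow> w - n' \<in> sperp sf (N l) \<Longrightarrow> n' = n"
    using Wplus_decomp_unique[OF N_Wplus[OF l], of w] by blast
  have "\<exists>!u. u \<in> sperp sf (N l) \<and> w - u \<in> N l"
  proof (rule ex1I[of _ "w - n"])
    show "w - n \<in> sperp sf (N l) \<and> w - (w - n) \<in> N l"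
      using n by simp
    show "u = w - n" if "u \<in> sperp sf (N l) \<and> w - u \<in> N l" for u
    proof -
      have "w - u = n"
        using unique[of "w - u"] that by simp
      then show ?thesis
        by force
    qed
  qed
  moreover have "projP sf N (True, l) w = (THE u. u \<in> sperp sf (N l) \<and> w - u \<in> N l)"
    by (simp add: projP_def Fdag_def fibE_def dbar_def)
  ultimately have "w - projP sf N (True, l) w \<in> N l"
    using theI'[of "\<lambda>u. u \<in> sperp sf (N l) \<and> w - u \<in> N l"] by simp
  then have "sf (w - projP sf N (True, l) w) g = 0"
    using sperpD'[OF g] by blast
  then show ?thesis
    by (simp add: sf_diff_left)
qed

lemma sf_projP_False:
  assumes l: "l \<in> ball 0 1" and g: "g \<in> N (cnj l)"
  shows "sf (projP sf N (False, l) w) g = sf w g"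
proof -
  have "projP sf N (False, l) w = (THE u. u \<in> N (cnj l) \<and> w - u \<in> sperp sf (N (cnj l)))"
    by (simp add: projP_def Fdag_def fibE_def dbar_def)
  then have "w - projP sf N (False, l) w \<in> sperp sf (N (cnj l))"
    using theI'[OF Wplus_decomp_unique[OF N_Wplus[OF cnj_in_ball[OF l]], of w]] by simp
  then have "sf (w - projP sf N (False, l) w) g = 0"
    using sperpD g by blast
  then show ?thesis
    by (simp add: sf_diff_left)
qed

lemma phidag_True_eqI:
  assumes l: "l \<in> ball 0 1" and v: "v \<in> sperp sf (N 0)"
    and eq: "\<And>x. x \<in> sperp sf (N 0) \<Longrightarrow> \<i> * sf v x = \<omega> (nevBadj sf N l x + x)"
  shows "phidag sf N (True, l) \<omega> = v"
  unfolding phidag_def Hm_def ipm_def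
proof (simp add: gam_def dbar_def, rule the_equality)
  show "v \<in> sperp sf (N 0) \<and> (\<forall>x\<in>sperp sf (N 0). \<i> * sf v x = \<omega> (nevBadj sf N l x + x))"
    using v eq by simp
  show "v' = v" if "v' \<in> sperp sf (N 0) \<and> (\<forall>x\<in>sperp sf (N 0). \<i> * sf v' x = \<omega> (nevBadj sf N l x + x))"
    for v'
  proof (rule sperp_Wplus_sf_injective[OF N0_Wplus])
    fix x assume x: "x \<in> sperp sf (N 0)"
    then have "\<i> * sf v' x = \<i> * sf v x"
      using that eq[OF x] by (simp add: Ball_def)
    then show "sf v' x = sf v x"
      by simp
  qed (use that v in auto)
qed

lemma phidag_False_eqI:
  assumes l: "l \<in> ball 0 1" and v: "v \<in> N 0"
    and eq: "\<And>x. x \<in> N 0 \<Longrightarrow> - \<i> * sf v x = \<omega> (x + nevB sf N (cnj l) x)"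
  shows "phidag sf N (False, l) \<omega> = v"
  unfolding phidag_def Hp_def ipp_def
proof (simp add: gam_def dbar_def, rule the_equality)
  show "v \<in> N 0 \<and> (\<forall>x\<in>N 0. - (\<i> * sf v x) = \<omega> (x + nevB sf N (cnj l) x))"
    using v eq by simp
  show "v' = v" if "v' \<in> N 0 \<and> (\<forall>x\<in>N 0. - (\<i> * sf v' x) = \<omega> (x + nevB sf N (cnj l) x))"
    for v'
  proof (rule Wplus_sf_injective[OF N0_Wplus])
    fix x assume x: "x \<in> N 0"
    then have "- \<i> * sf v' x = - \<i> * sf v x"
      using that eq[OF x] by (simp add: Ball_def)
    then show "sf v' x = sf v x"
      by simp
  qed (use that v in auto)
qed

(* phi^dagger is characterised by pairing with gamma(conj l) x', which is symplectically
   orthogonal to the range of I - P; hence the projection in K drops out. *)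

lemma lockern_raw_True_eqI:
  assumes l: "l \<in> ball 0 1" and v: "v \<in> sperp sf (N 0)"
    and eq: "\<And>x'. x' \<in> sperp sf (N 0) \<Longrightarrow>
      sf v x' = kernel_factor (True, l) q * sf (gam sf N (dbar q) x) (nevBadj sf N l x' + x')"
  shows "lockern_raw sf N (True, l) q x = v"
  unfolding lockern_raw_def
proof (rule phidag_True_eqI[OF l v])
  fix x' assume x': "x' \<in> sperp sf (N 0)"
  show "\<i> * sf v x' = kern sf N (True, l) q (gam sf N (dbar q) x) (nevBadj sf N l x' + x')"
    using eq[OF x'] sf_projP_True[OF l nevBadj_graph_sperp[OF l x']]
    by (simp add: kern_eq Fdag_ip_def fib_ip_def dbar_def)
qed

lemma lockern_raw_False_eqI:
  assumes l: "l \<in> ball 0 1" and v: "v \<in> N 0"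
    and eq: "\<And>x'. x' \<in> N 0 \<Longrightarrow>
      sf v x' = kernel_factor (False, l) q * sf (gam sf N (dbar q) x) (x' + nevB sf N (cnj l) x')"
  shows "lockern_raw sf N (False, l) q x = v"
  unfolding lockern_raw_def
proof (rule phidag_False_eqI[OF l v])
  fix x' assume x': "x' \<in> N 0"
  show "- \<i> * sf v x' = kern sf N (False, l) q (gam sf N (dbar q) x) (x' + nevB sf N (cnj l) x')"
    using eq[OF x'] sf_projP_False[OF l nevB_graph[OF cnj_in_ball[OF l] x']]
    by (simp add: kern_eq Fdag_ip_def fib_ip_def dbar_def)
qed

lemma lockern_raw_plus_plus:
  assumes l: "l \<in> ball 0 1" and m: "m \<in> ball 0 1" and x: "x \<in> sperp sf (N 0)"
  shows "lockern_raw sf N (True, l) (True, m) x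
    = (1 / (1 - l * cnj m)) *\<^sub>C (x - nevB sf N l (nevBadj sf N m x))"
proof (rule lockern_raw_True_eqI[OF l])
  have z: "nevBadj sf N m x \<in> N 0"
    using nevBadj_N0[OF m] .
  show "(1 / (1 - l * cnj m)) *\<^sub>C (x - nevB sf N l (nevBadj sf N m x)) \<in> sperp sf (N 0)"
    using csubspace_scaleC[OF csubspace_sperp
        csubspace_diff[OF csubspace_sperp x nevB_sperp[OF l z]]] .
  fix x' assume x': "x' \<in> sperp sf (N 0)"
  have "gam sf N (dbar (True, m)) x = nevBadj sf N m x + x"
    by (simp add: gam_def dbar_def)
  moreover have "sf (nevBadj sf N m x) x' = 0" "sf x (nevBadj sf N l x') = 0"
    using sperpD'[OF x' z] sperpD[OF x nevBadj_N0[OF l]] .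
  ultimately show "sf ((1 / (1 - l * cnj m)) *\<^sub>C (x - nevB sf N l (nevBadj sf N m x))) x'
    = kernel_factor (True, l) (True, m) * sf (gam sf N (dbar (True, m)) x) (nevBadj sf N l x' + x')"
    using sf_nevBadj_right[OF l z]
    by (simp add: kernel_factor_def sf_scaleC_left sf_diff_left sf_add_left sf_add_right)
qed

lemma lockern_raw_minus_minus:
  assumes l: "l \<in> ball 0 1" and m: "m \<in> ball 0 1" and x: "x \<in> N 0"
  shows "lockern_raw sf N (False, l) (False, m) x
    = (1 / (1 - l * cnj m)) *\<^sub>C (x - nevBadj sf N (cnj l) (nevB sf N (cnj m) x))"
proof (rule lockern_raw_False_eqI[OF l])
  note l' = cnj_in_ball[OF l] and m' = cnj_in_ball[OF m] and N0 = Wplus_csubspace[OF N0_Wplus]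
  show "(1 / (1 - l * cnj m)) *\<^sub>C (x - nevBadj sf N (cnj l) (nevB sf N (cnj m) x)) \<in> N 0"
    using csubspace_scaleC[OF N0 csubspace_diff[OF N0 x nevBadj_N0[OF l']]] .
  fix x' assume x': "x' \<in> N 0"
  have "gam sf N (dbar (False, m)) x = x + nevB sf N (cnj m) x"
    by (simp add: gam_def dbar_def)
  moreover have "sf x (nevB sf N (cnj l) x') = 0" "sf (nevB sf N (cnj m) x) x' = 0"
    using sperpD'[OF nevB_sperp[OF l' x'] x] sperpD[OF nevB_sperp[OF m' x] x'] .
  ultimately show "sf ((1 / (1 - l * cnj m)) *\<^sub>C (x - nevBadj sf N (cnj l) (nevB sf N (cnj m) x))) x'
    = kernel_factor (False, l) (False, m)
        * sf (gam sf N (dbar (False, m)) x) (x' + nevB sf N (cnj l) x')"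
    using nevBadj_adjoint[OF l' x']
    by (simp add: kernel_factor_def sf_scaleC_left sf_diff_left sf_add_left sf_add_right)
qed

lemma lockern_raw_plus_minus:
  assumes l: "l \<in> ball 0 1" and m: "m \<in> ball 0 1" and x: "x \<in> N 0"
  shows "lockern_raw sf N (True, l) (False, m) x
    = (1 / (l - cnj m)) *\<^sub>C (nevB sf N l x - nevB sf N (cnj m) x)"
proof (rule lockern_raw_True_eqI[OF l])
  note m' = cnj_in_ball[OF m]
  show "(1 / (l - cnj m)) *\<^sub>C (nevB sf N l x - nevB sf N (cnj m) x) \<in> sperp sf (N 0)"
    using csubspace_scaleC[OF csubspace_sperp
        csubspace_diff[OF csubspace_sperp nevB_sperp[OF l x] nevB_sperp[OF m' x]]] .
  fix x' assume x': "x' \<in> sperp sf (N 0)"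
  have "gam sf N (dbar (False, m)) x = x + nevB sf N (cnj m) x"
    by (simp add: gam_def dbar_def)
  moreover have "sf x x' = 0" "sf (nevB sf N (cnj m) x) (nevBadj sf N l x') = 0"
    using sperpD'[OF x' x] sperpD[OF nevB_sperp[OF m' x] nevBadj_N0[OF l]] .
  ultimately have "sf (gam sf N (dbar (False, m)) x) (nevBadj sf N l x' + x')
    = - (sf (nevB sf N l x) x' - sf (nevB sf N (cnj m) x) x')"
    using sf_nevBadj_right[OF l x] by (simp add: sf_add_left sf_add_right)
  then show "sf ((1 / (l - cnj m)) *\<^sub>C (nevB sf N l x - nevB sf N (cnj m) x)) x'
    = kernel_factor (True, l) (False, m)
        * sf (gam sf N (dbar (False, m)) x) (nevBadj sf N l x' + x')"
    by (simp add: kernel_factor_def sf_scaleC_left sf_diff_left)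
      (simp only: minus_divide_left minus_diff_eq)
qed

lemma lockern_raw_minus_plus:
  assumes l: "l \<in> ball 0 1" and m: "m \<in> ball 0 1" and x: "x \<in> sperp sf (N 0)"
  shows "lockern_raw sf N (False, l) (True, m) x
    = (1 / (l - cnj m)) *\<^sub>C (nevBadj sf N (cnj l) x - nevBadj sf N m x)"
proof (rule lockern_raw_False_eqI[OF l])
  note l' = cnj_in_ball[OF l] and N0 = Wplus_csubspace[OF N0_Wplus]
  show "(1 / (l - cnj m)) *\<^sub>C (nevBadj sf N (cnj l) x - nevBadj sf N m x) \<in> N 0"
    using csubspace_scaleC[OF N0 csubspace_diff[OF N0 nevBadj_N0[OF l'] nevBadj_N0[OF m]]] .
  fix x' assume x': "x' \<in> N 0"
  have "gam sf N (dbar (True, m)) x = nevBadj sf N m x + x"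
    by (simp add: gam_def dbar_def)
  moreover have "sf (nevBadj sf N m x) (nevB sf N (cnj l) x') = 0" "sf x x' = 0"
    using sperpD'[OF nevB_sperp[OF l' x'] nevBadj_N0[OF m]] sperpD[OF x x'] .
  ultimately have "sf (gam sf N (dbar (True, m)) x) (x' + nevB sf N (cnj l) x')
    = - (sf (nevBadj sf N (cnj l) x) x' - sf (nevBadj sf N m x) x')"
    using nevBadj_adjoint[OF l' x'] by (simp add: sf_add_left sf_add_right)
  then show "sf ((1 / (l - cnj m)) *\<^sub>C (nevBadj sf N (cnj l) x - nevBadj sf N m x)) x'
    = kernel_factor (False, l) (True, m)
        * sf (gam sf N (dbar (True, m)) x) (x' + nevB sf N (cnj l) x')"
    by (simp add: kernel_factor_def sf_scaleC_left sf_diff_left)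
      (simp only: minus_divide_left minus_diff_eq)
qed

lemma lockern_plus_plus:
  "l \<in> ball 0 1 \<Longrightarrow> m \<in> ball 0 1 \<Longrightarrow> x \<in> Hm sf N \<Longrightarrow>
    lockern sf N (True, l) (True, m) x
      = (1 / (1 - l * cnj m)) *\<^sub>C (x - nevB sf N l (nevBadj sf N m x))"
  unfolding Hm_def lockern_same_sheet by (rule lockern_raw_plus_plus)

lemma lockern_minus_minus:
  "l \<in> ball 0 1 \<Longrightarrow> m \<in> ball 0 1 \<Longrightarrow> x \<in> Hp N \<Longrightarrow>
    lockern sf N (False, l) (False, m) x
      = (1 / (1 - l * cnj m)) *\<^sub>C (x - nevBadj sf N (cnj l) (nevB sf N (cnj m) x))"
  unfolding Hp_def lockern_same_sheet by (rule lockern_raw_minus_minus)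

lemma lockern_plus_minus:
  "l \<in> ball 0 1 \<Longrightarrow> m \<in> ball 0 1 \<Longrightarrow> x \<in> Hp N \<Longrightarrow>
    lockern sf N (True, l) (False, m) x
      = (if l \<noteq> cnj m
         then (1 / (l - cnj m)) *\<^sub>C (nevB sf N l x - nevB sf N (cnj m) x)
         else Lim (at (cnj m))
                (\<lambda>l'. (1 / (l' - cnj m)) *\<^sub>C (nevB sf N l' x - nevB sf N (cnj m) x)))"
  unfolding Hp_def by (intro lockern_opposite_sheets lockern_raw_plus_minus) simp_all

lemma lockern_minus_plus:
  "l \<in> ball 0 1 \<Longrightarrow> m \<in> ball 0 1 \<Longrightarrow> x \<in> Hm sf N \<Longrightarrow>
    lockern sf N (False, l) (True, m) x
      = (if l \<noteq> cnj m
         then (1 / (l - cnj m)) *\<^sub>C (nevBadj sf N (cnj l) x - nevBadj sf N m x)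
         else Lim (at (cnj m))
                (\<lambda>l'. (1 / (l' - cnj m)) *\<^sub>C (nevBadj sf N (cnj l') x - nevBadj sf N m x)))"
  unfolding Hm_def by (intro lockern_opposite_sheets lockern_raw_minus_plus) simp_all

end

theorem proposition5p2:
  fixes sf :: "'h::chilbert \<Rightarrow> 'h \<Rightarrow> complex" and N :: "complex \<Rightarrow> 'h set"
  assumes "strong_symplectic sf" and "nevanlinna_disc sf N"
  shows
  "(\<forall>l\<in>ball 0 1. \<forall>m\<in>ball 0 1. \<forall>x\<in>Hm sf N.
      lockern sf N (True, l) (True, m) x
        = (1 / (1 - l * cnj m)) *\<^sub>C (x - nevB sf N l (nevBadj sf N m x))) \<and>
   (\<forall>l\<in>ball 0 1. \<forall>m\<in>ball 0 1. \<forall>x\<in>Hp N.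
      lockern sf N (False, l) (False, m) x
        = (1 / (1 - l * cnj m)) *\<^sub>C (x - nevBadj sf N (cnj l) (nevB sf N (cnj m) x))) \<and>
   (\<forall>l\<in>ball 0 1. \<forall>m\<in>ball 0 1. \<forall>x\<in>Hp N.
      lockern sf N (True, l) (False, m) x
        = (if l \<noteq> cnj m
           then (1 / (l - cnj m)) *\<^sub>C (nevB sf N l x - nevB sf N (cnj m) x)
           else Lim (at (cnj m))
                  (\<lambda>l'. (1 / (l' - cnj m)) *\<^sub>C (nevB sf N l' x - nevB sf N (cnj m) x)))) \<and>
   (\<forall>l\<in>ball 0 1. \<forall>m\<in>ball 0 1. \<forall>x\<in>Hm sf N.
      lockern sf N (False, l) (True, m) x
        = (if l \<noteq> cnj m
           then (1 / (l - cnj m)) *\<^sub>C (nevBadj sf N (cnj l) x - nevBadj sf N m x)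
           else Lim (at (cnj m))
                  (\<lambda>l'. (1 / (l' - cnj m)) *\<^sub>C (nevBadj sf N (cnj l') x - nevBadj sf N m x))))"
proof -
  interpret nevanlinna sf N
    by unfold_locales (rule assms)+
  show ?thesis
    by (intro conjI ballI
        lockern_plus_plus lockern_minus_minus lockern_plus_minus lockern_minus_plus)
qed

end
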